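(* Let $\mathfrak{g}$ be a real Lie algebra of dimension $2n$ and let $V\subset\mathfrak{g}$ be a subspace of dimension $n$ such that: (1) the linear map $\tilde N^H\colon V^{\mathrm{ann}}\to\Lambda^2V^*$ has rank three; (2) its image $W=\operatorname{im}\tilde N^H$ consists of simple forms, i.e. $\eta\wedge\eta=0$ for all $\eta\in W$; (3) there is no $\sigma\in V^*\setminus\{0\}$ such that $\sigma\wedge\eta=0$ for all $\eta\in W$. Then for any Lie subalgebra $H\subset\mathfrak{g}$ complementary to $V$ there exists a $\mathrm{GL}(n,\mathbb{R})$-structure compatible with the splitting $\mathfrak{g}=V\oplus H$ whose intrinsic torsion satisfies $\tau_2=0=\tau_5=\tau_6$.
   Context: $d$ denotes the Chevalley--Eilenberg differential on $\Lambda\mathfrak{g}^*$, so $d\xi(X,Y)=-\xi([X,Y])$ for $\xi\in\mathfrak{g}^*$. $V^{\mathrm{ann}}\subset\mathfrak{g}^*$ is the annihilator of $V$, and $\tilde N^H(\xi)=d\xi|_{V\times V}\in\Lambda^2V^*$. A $\mathrm{GL}(n,\mathbb{R})$-structure compatible with $\mathfrak{g}=V\oplus H$ is a pseudoriemannian (necessarily neutral) metric $g$ on $\mathfrak{g}$ with $g(KX,KY)=-g(X,Y)$, where $K=\mathrm{id}_V-\mathrm{id}_H$; equivalently a nondegenerate two-form $F(X,Y)=g(KX,Y)$ vanishing on $V\times V$ and on $H\times H$. In this setting the components $\tau_1+\tau_2$ of the intrinsic torsion correspond (up to a nonzero constant factor) to the tensor $A(X,Y,Z)=g([X,Y],Z)$,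 $X,Y,Z\in V$, viewed in $\Lambda^2V^*\otimes V^*=\Lambda^3V^*\oplus W_2$, where $\tau_1$ is its totally skew part and $\tau_2$ its component in the complement $W_2$ (the kernel of the alternation map $\Lambda^2V^*\otimes V^*\to\Lambda^3V^*$); thus $\tau_2=0$ means that $A$ is totally skew-symmetric. Similarly $\tau_5+\tau_6$ correspond to $B(X,Y,Z)=g([X,Y],Z)$ for $X,Y,Z\in H$, so $\tau_5=\tau_6=0$ means $B=0$. *)

theory Defs
  imports "HOL-Analysis.Analysis" "HOL-Library.Function_Algebras"
begin

definition lie_bracket :: "('a::real_vector \<Rightarrow> 'a \<Rightarrow> 'a) \<Rightarrow> bool" where
  "lie_bracket br \<longleftrightarrow> bilinear br \<and> (\<forall>x y. br x y = - br y x) \<and>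
     (\<forall>x y z. br x (br y z) + br y (br z x) + br z (br x y) = 0)"

definition lie_subalgebra :: "('a::real_vector \<Rightarrow> 'a \<Rightarrow> 'a) \<Rightarrow> 'a set \<Rightarrow> bool" where
  "lie_subalgebra br H \<longleftrightarrow> subspace H \<and> (\<forall>x\<in>H. \<forall>y\<in>H. br x y \<in> H)"

definition complementary :: "'a::real_vector set \<Rightarrow> 'a set \<Rightarrow> bool" where
  "complementary V H \<longleftrightarrow> subspace V \<and> subspace H \<and> V \<inter> H = {0} \<and>
     (\<forall>x. \<exists>v\<in>V. \<exists>h\<in>H. x = v + h)"

definition annihilator :: "'a::real_vector set \<Rightarrow> ('a \<Rightarrow> real) set" where
  "annihilator V = {\<xi>. linear \<xi> \<and> (\<forall>v\<in>V. \<xi> v = 0)}"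

text \<open>Two-forms on V are represented by functions 'a => 'a => real that vanish
  outside V x V (i.e. their values off V x V carry no information).\<close>
definition restrict2 :: "'a set \<Rightarrow> ('a \<Rightarrow> 'a \<Rightarrow> real) \<Rightarrow> ('a \<Rightarrow> 'a \<Rightarrow> real)" where
  "restrict2 V \<omega> = (\<lambda>X Y. if X \<in> V \<and> Y \<in> V then \<omega> X Y else 0)"

definition CE_d :: "('a \<Rightarrow> 'a \<Rightarrow> 'a) \<Rightarrow> ('a \<Rightarrow> real) \<Rightarrow> ('a \<Rightarrow> 'a \<Rightarrow> real)" where
  "CE_d br \<xi> = (\<lambda>X Y. - \<xi> (br X Y))"

definition NtH :: "('a \<Rightarrow> 'a \<Rightarrow> 'a) \<Rightarrow> 'a set \<Rightarrow> ('a \<Rightarrow> real) \<Rightarrow> ('a \<Rightarrow> 'a \<Rightarrow> real)" where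
  "NtH br V \<xi> = restrict2 V (CE_d br \<xi>)"

definition dim_forms2 :: "('a \<Rightarrow> 'a \<Rightarrow> real) set \<Rightarrow> nat" where
  "dim_forms2 W = vector_space.dim (\<lambda>c \<omega>. (\<lambda>X Y. c * \<omega> X Y)) W"

definition wedge22 :: "('a \<Rightarrow> 'a \<Rightarrow> real) \<Rightarrow> ('a \<Rightarrow> 'a \<Rightarrow> real) \<Rightarrow> 'a \<Rightarrow> 'a \<Rightarrow> 'a \<Rightarrow> 'a \<Rightarrow> real" where
  "wedge22 \<eta> \<mu> a b c d =
     \<eta> a b * \<mu> c d - \<eta> a c * \<mu> b d + \<eta> a d * \<mu> b c
   + \<eta> b c * \<mu> a d - \<eta> b d * \<mu> a c + \<eta> c d * \<mu> a b"

definition wedge12 :: "('a \<Rightarrow> real) \<Rightarrow> ('a \<Rightarrow> 'a \<Rightarrow> real) \<Rightarrow> 'a \<Rightarrow> 'a \<Rightarrow> 'a \<Rightarrow> real" where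
  "wedge12 \<sigma> \<eta> a b c = \<sigma> a * \<eta> b c - \<sigma> b * \<eta> a c + \<sigma> c * \<eta> a b"

definition splitK :: "'a::real_vector set \<Rightarrow> 'a set \<Rightarrow> 'a \<Rightarrow> 'a" where
  "splitK V H x = (THE y. \<exists>v\<in>V. \<exists>h\<in>H. x = v + h \<and> y = v - h)"

definition pseudo_metric :: "('a::real_vector \<Rightarrow> 'a \<Rightarrow> real) \<Rightarrow> bool" where
  "pseudo_metric g \<longleftrightarrow> bilinear g \<and> (\<forall>X Y. g X Y = g Y X) \<and>
     (\<forall>X. (\<forall>Y. g X Y = 0) \<longrightarrow> X = 0)"

definition GL_structure_compatible :: "'a::real_vector set \<Rightarrow> 'a set \<Rightarrow> ('a \<Rightarrow> 'a \<Rightarrow> real) \<Rightarrow> bool" where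
  "GL_structure_compatible V H g \<longleftrightarrow> pseudo_metric g \<and>
     (\<forall>X Y. g (splitK V H X) (splitK V H Y) = - g X Y)"

definition tau2_zero :: "('a \<Rightarrow> 'a \<Rightarrow> 'a) \<Rightarrow> 'a set \<Rightarrow> ('a \<Rightarrow> 'a \<Rightarrow> real) \<Rightarrow> bool" where
  "tau2_zero br V g \<longleftrightarrow> (let A = (\<lambda>X Y Z. g (br X Y) Z) in
     \<forall>X\<in>V. \<forall>Y\<in>V. \<forall>Z\<in>V. A X Y Z = - A Y X Z \<and> A X Y Z = - A X Z Y \<and> A X Y Z = - A Z Y X)"

definition tau56_zero :: "('a \<Rightarrow> 'a \<Rightarrow> 'a) \<Rightarrow> 'a set \<Rightarrow> ('a \<Rightarrow> 'a \<Rightarrow> real) \<Rightarrow> bool" where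
  "tau56_zero br H g \<longleftrightarrow> (\<forall>X\<in>H. \<forall>Y\<in>H. \<forall>Z\<in>H. g (br X Y) Z = 0)"

end

theory Submission
  imports Defs
begin

text \<open>
  Identify V with its dual through the inner product, so that a nonzero simple 2-form on V is
  p \<and> q for a plane span {p, q} in V. If \<eta>, \<mu> and \<eta> + \<mu> are simple then \<eta> \<and> \<mu> = 0, and this
  forces the planes of \<eta> and \<mu> to meet in a line. So the planes of a basis of W meet pairwise;
  by condition (3) they have no line in common, hence they lie in a 3-space with an orthonormal
  basis u1, u2, u3, and W is spanned by u2 \<and> u3, u3 \<and> u1, u1 \<and> u2. Choose k1, k2, k3 orthogonal to V
  whose differentials restrict to these forms, and extend u_i \<mapsto> k_i to an isomorphism \<Psi> of V onto
  its orthogonal complement that maps the orthogonal complement of the u_i onto the kernel of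
  the restricted differential. Then <\<Psi> Z, [X, Y]> = - (u1 \<and> u2 \<and> u3)(Z, X, Y) on V, which is
  totally skew. The neutral metric pairing V with H through \<Psi> makes V and H isotropic, its
  tensor A is (X, Y, Z) \<mapsto> <\<Psi> Z, [X, Y]>, and B vanishes because H is a subalgebra on which the
  projection onto V is zero.
\<close>

lemma in_orthogonal_comp_iff: "x \<in> V\<^sup>\<bottom> \<longleftrightarrow> (\<forall>v\<in>V. x \<bullet> v = 0)"
  by (auto simp: orthogonal_comp_def orthogonal_def inner_commute)

lemma linear_functional_eq_inner:
  fixes f :: "'a::euclidean_space \<Rightarrow> real"
  assumes "linear f"
  shows "f x = adjoint f 1 \<bullet> x"
  using adjoint_works[OF assms, of x 1] by (simp add: inner_commute)

lemma linear_functional_eq_inner_on_subspace: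
  fixes f :: "'a::euclidean_space \<Rightarrow> real"
  assumes "linear f" "subspace V"
  obtains p where "p \<in> V" "\<And>x. x \<in> V \<Longrightarrow> f x = p \<bullet> x"
proof -
  obtain p r where "p \<in> V" "r \<in> V\<^sup>\<bottom>" "adjoint f 1 = p + r"
    using subspace_sum_orthogonal_comp[OF assms(2)] set_plus_elim by blast
  then have "f x = p \<bullet> x" if "x \<in> V" for x
    using that linear_functional_eq_inner[OF assms(1)] by (simp add: in_orthogonal_comp_iff inner_add_left)
  with \<open>p \<in> V\<close> show thesis by (rule that)
qed

lemma span_pair_iff: "r \<in> span {p, q} \<longleftrightarrow> (\<exists>a b. r = a *\<^sub>R p + b *\<^sub>R q)"
  by (auto simp: span_insert span_singleton) (metis diff_add_cancel add.commute, metis add_diff_cancel_left')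

lemma span_triple_iff: "x \<in> span {a, b, c} \<longleftrightarrow> (\<exists>p q r. x = p *\<^sub>R a + q *\<^sub>R b + r *\<^sub>R c)"
  by (auto simp: span_insert[of a] span_pair_iff algebra_simps)

definition lin_indep2 :: "'a::real_vector \<Rightarrow> 'a \<Rightarrow> bool" where
  "lin_indep2 p q \<longleftrightarrow> (\<forall>a b. a *\<^sub>R p + b *\<^sub>R q = 0 \<longrightarrow> a = 0 \<and> b = 0)"

lemma dim_lin_indep2:
  fixes p q :: "'a::euclidean_space"
  assumes "lin_indep2 p q" shows "dim {p, q} = 2"
proof -
  have "q \<noteq> 0" using assms[unfolded lin_indep2_def, rule_format, of 0 1] by auto
  moreover have "p \<notin> span {q}"
  proof
    assume "p \<in> span {q}"
    then obtain c where "p = c *\<^sub>R q" by (auto simp: span_singleton)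
    then have "1 *\<^sub>R p + (- c) *\<^sub>R q = 0" by simp
    then show False using assms unfolding lin_indep2_def by fastforce
  qed
  ultimately show ?thesis by (simp add: dim_insert)
qed

lemma dim_lin_indep3:
  fixes x y z :: "'a::euclidean_space"
  assumes indep: "\<forall>a b c. a *\<^sub>R x + b *\<^sub>R y + c *\<^sub>R z = 0 \<longrightarrow> a = 0 \<and> b = 0 \<and> c = 0"
  shows "dim {x, y, z} = 3"
proof -
  have "lin_indep2 y z" unfolding lin_indep2_def using indep[rule_format, of 0] by auto
  moreover have "x \<notin> span {y, z}"
  proof
    assume "x \<in> span {y, z}"
    then obtain b c where "x = b *\<^sub>R y + c *\<^sub>R z" by (auto simp: span_pair_iff)
    then have "1 *\<^sub>R x + (- b) *\<^sub>R y + (- c) *\<^sub>R z = 0" by simp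
    then show False using indep by fastforce
  qed
  ultimately show ?thesis using dim_insert[of x "{y, z}"] dim_lin_indep2 by simp
qed

section \<open>Decomposable 2-forms\<close>

definition plane_form :: "'a::real_inner \<Rightarrow> 'a \<Rightarrow> 'a \<Rightarrow> 'a \<Rightarrow> real" where
  "plane_form p q x y = (p \<bullet> x) * (q \<bullet> y) - (p \<bullet> y) * (q \<bullet> x)"

lemma plane_form_eq_0_if_not_lin_indep2:
  assumes "\<not> lin_indep2 p q" shows "plane_form p q x y = 0"
proof -
  obtain a b where ab: "a *\<^sub>R p + b *\<^sub>R q = 0" "a \<noteq> 0 \<or> b \<noteq> 0"
    using assms unfolding lin_indep2_def by blast
  have "a * plane_form p q x y = 0" "b * plane_form p q x y = 0"
    using arg_cong[OF ab(1), of "\<lambda>v. v \<bullet> x * (q \<bullet> y) - v \<bullet> y * (q \<bullet> x)"]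
      arg_cong[OF ab(1), of "\<lambda>v. p \<bullet> x * (v \<bullet> y) - p \<bullet> y * (v \<bullet> x)"]
    by (simp_all add: plane_form_def inner_add_left algebra_simps)
  with ab(2) show ?thesis by auto
qed

lemma lin_indep2_iff_plane_form_self:
  fixes p q :: "'a::real_inner"
  shows "lin_indep2 p q \<longleftrightarrow> plane_form p q p q \<noteq> 0"
proof
  assume "plane_form p q p q \<noteq> 0"
  then show "lin_indep2 p q" using plane_form_eq_0_if_not_lin_indep2 by blast
next
  assume indep: "lin_indep2 p q"
  have "p \<noteq> 0" using indep[unfolded lin_indep2_def, rule_format, of 1 0] by auto
  show "plane_form p q p q \<noteq> 0"
  proof
    assume "plane_form p q p q = 0"
    then have gram: "(p \<bullet> q) * (p \<bullet> q) = (p \<bullet> p) * (q \<bullet> q)"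
      by (simp add: plane_form_def inner_commute)
    define c where "c = (p \<bullet> q) / (p \<bullet> p)"
    \<comment> \<open>the Gram determinant is the squared length of the component of q orthogonal to p\<close>
    have "(q - c *\<^sub>R p) \<bullet> (q - c *\<^sub>R p) = 0"
      using \<open>p \<noteq> 0\<close> gram by (simp add: c_def inner_diff_left inner_diff_right inner_commute field_simps)
    then have "(- c) *\<^sub>R p + 1 *\<^sub>R q = 0" by simp
    then show False using indep unfolding lin_indep2_def by fastforce
  qed
qed

lemma plane_form_span_pair:
  assumes "r \<in> span {p, q}" "s \<in> span {p, q}"
  obtains c where "\<And>x y. plane_form r s x y = c * plane_form p q x y"
proof -
  obtain a b a' b' where "r = a *\<^sub>R p + b *\<^sub>R q" "s = a' *\<^sub>R p + b' *\<^sub>R q"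
    using assms span_pair_iff by metis
  then have "plane_form r s x y = (a * b' - b * a') * plane_form p q x y" for x y
    by (simp add: plane_form_def inner_add_left algebra_simps)
  then show thesis by (rule that)
qed

lemma plane_form_span_triple:
  assumes "r \<in> span {u1, u2, u3}" "s \<in> span {u1, u2, u3}"
  obtains a b c where "\<And>x y. plane_form r s x y =
    a * plane_form u2 u3 x y + b * plane_form u3 u1 x y + c * plane_form u1 u2 x y"
proof -
  obtain r1 r2 r3 s1 s2 s3 where "r = r1 *\<^sub>R u1 + r2 *\<^sub>R u2 + r3 *\<^sub>R u3" "s = s1 *\<^sub>R u1 + s2 *\<^sub>R u2 + s3 *\<^sub>R u3"
    using assms span_triple_iff by metis
  then have "plane_form r s x y = (r2 * s3 - r3 * s2) * plane_form u2 u3 x y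
      + (r3 * s1 - r1 * s3) * plane_form u3 u1 x y + (r1 * s2 - r2 * s1) * plane_form u1 u2 x y" for x y
    by (simp add: plane_form_def inner_add_left algebra_simps)
  then show thesis by (rule that)
qed

lemma wedge12_plane_form_eq_0:
  assumes "z \<in> span {p, q}"
  shows "wedge12 (\<lambda>x. z \<bullet> x) (plane_form p q) a b c = 0"
proof -
  obtain s t where "z = s *\<^sub>R p + t *\<^sub>R q" using assms span_pair_iff by blast
  then show ?thesis by (simp add: wedge12_def plane_form_def inner_add_left algebra_simps)
qed

lemma planes_meet_if_wedge22_eq_0:
  fixes p q r s :: "'a::euclidean_space"
  assumes V: "subspace V" "p \<in> V" "q \<in> V" "r \<in> V" "s \<in> V"
    and indep: "lin_indep2 p q" "lin_indep2 r s"
    and wedge: "\<forall>a\<in>V. \<forall>b\<in>V. \<forall>c\<in>V. \<forall>d\<in>V. wedge22 (plane_form p q) (plane_form r s) a b c d = 0"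
  obtains z where "z \<noteq> 0" "z \<in> span {p, q}" "z \<in> span {r, s}"
proof -
  let ?P = "span {p, q}"
  have "subspace ?P" by simp
  have "r \<in> ?P + ?P\<^sup>\<bottom>" "s \<in> ?P + ?P\<^sup>\<bottom>"
    using subspace_sum_orthogonal_comp[OF \<open>subspace ?P\<close>] by auto
  then obtain r0 r1 s0 s1 where rs: "r0 \<in> ?P" "s0 \<in> ?P" "r1 \<in> ?P\<^sup>\<bottom>" "s1 \<in> ?P\<^sup>\<bottom>" "r = r0 + r1" "s = s0 + s1"
    by (metis set_plus_elim)
  have "?P \<subseteq> V" using V by (simp add: span_minimal)
  then have "r - r0 \<in> V" "s - s0 \<in> V" using rs(1,2) V by (auto intro: subspace_diff)
  then have "r1 \<in> V" "s1 \<in> V" using rs(5,6) by simp_all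
  have "p \<in> ?P" "q \<in> ?P" by (auto intro: span_base)
  then have orth: "r1 \<bullet> p = 0" "r1 \<bullet> q = 0" "s1 \<bullet> p = 0" "s1 \<bullet> q = 0"
    "r1 \<bullet> r0 = 0" "r1 \<bullet> s0 = 0" "s1 \<bullet> r0 = 0" "s1 \<bullet> s0 = 0"
    using rs unfolding in_orthogonal_comp_iff by auto
  then have orth': "p \<bullet> r1 = 0" "q \<bullet> r1 = 0" "p \<bullet> s1 = 0" "q \<bullet> s1 = 0"
    "r0 \<bullet> r1 = 0" "s0 \<bullet> r1 = 0" "r0 \<bullet> s1 = 0" "s0 \<bullet> s1 = 0"
    by (simp_all add: inner_commute)
  have "plane_form p q p q \<noteq> 0" using indep(1) lin_indep2_iff_plane_form_self by blast
  moreover have "wedge22 (plane_form p q) (plane_form r s) p q r1 s1 = 0"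
    using wedge V \<open>r1 \<in> V\<close> \<open>s1 \<in> V\<close> by blast
  \<comment> \<open>at (p, q, r1, s1) only the term (p \<and> q)(p, q) * (r \<and> s)(r1, s1) of the wedge survives\<close>
  ultimately have "plane_form r s r1 s1 = 0"
    by (simp add: wedge22_def plane_form_def orth orth')
  then have "plane_form r1 s1 r1 s1 = 0"
    by (simp add: plane_form_def rs(5,6) inner_add_left orth orth')
  then obtain c d where cd: "c *\<^sub>R r1 + d *\<^sub>R s1 = 0" "c \<noteq> 0 \<or> d \<noteq> 0"
    using lin_indep2_iff_plane_form_self unfolding lin_indep2_def by blast
  \<comment> \<open>the dependence between the orthogonal parts of r and s leaves a vector of the plane of p and q\<close>
  define z where "z = c *\<^sub>R r + d *\<^sub>R s"
  have "z = c *\<^sub>R r0 + d *\<^sub>R s0"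
    using cd(1) by (simp add: z_def rs(5,6) algebra_simps)
  then have "z \<in> ?P" using rs(1,2) by (simp add: span_add span_scale)
  moreover have "z \<noteq> 0" using indep(2) cd(2) unfolding lin_indep2_def z_def by blast
  moreover have "z \<in> span {r, s}" unfolding z_def span_pair_iff by blast
  ultimately show thesis using that by blast
qed

lemma simple_bilinear_eq_plane_form:
  fixes f :: "'a::euclidean_space \<Rightarrow> 'a \<Rightarrow> real"
  assumes "bilinear f" "subspace V"
    and simple: "\<forall>a\<in>V. \<forall>b\<in>V. \<forall>c\<in>V. \<forall>d\<in>V. wedge22 f f a b c d = 0"
    and ab: "a \<in> V" "b \<in> V" "f a b \<noteq> 0"
  obtains p q where "p \<in> V" "q \<in> V" "lin_indep2 p q" "\<And>x y. x \<in> V \<Longrightarrow> y \<in> V \<Longrightarrow> f x y = plane_form p q x y"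
proof -
  define t where "t = f a b"
  have "linear (\<lambda>x. f a x / t)"
    using assms(1) unfolding bilinear_def by (auto intro!: linearI simp: linear_add linear_scale add_divide_distrib)
  then obtain p where p: "p \<in> V" "\<And>x. x \<in> V \<Longrightarrow> f a x / t = p \<bullet> x"
    using linear_functional_eq_inner_on_subspace[OF _ assms(2)] by blast
  have "linear (f b)" using assms(1) unfolding bilinear_def by simp
  then obtain q where q: "q \<in> V" "\<And>x. x \<in> V \<Longrightarrow> f b x = q \<bullet> x"
    using linear_functional_eq_inner_on_subspace[OF _ assms(2)] by blast
  have f: "f x y = plane_form p q x y" if "x \<in> V" "y \<in> V" for x y
  proof -
    have "wedge22 f f a b x y = 0" using simple ab that by blast
    then have "t * f x y - f a x * f b y + f a y * f b x = 0"
      unfolding wedge22_def t_def by (simp add: algebra_simps)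
    then have "f x y = (f a x / t) * f b y - (f a y / t) * f b x"
      using ab(3) unfolding t_def[symmetric] by (simp add: field_simps)
    then show ?thesis using p q that by (simp add: plane_form_def)
  qed
  then have "lin_indep2 p q" using ab plane_form_eq_0_if_not_lin_indep2 by fastforce
  with p(1) q(1) show thesis using f by (rule that)
qed

section \<open>Planes meeting pairwise\<close>

definition orthonormal3 :: "'a::real_inner \<Rightarrow> 'a \<Rightarrow> 'a \<Rightarrow> bool" where
  "orthonormal3 u1 u2 u3 \<longleftrightarrow>
     u1 \<bullet> u1 = 1 \<and> u2 \<bullet> u2 = 1 \<and> u3 \<bullet> u3 = 1 \<and> u1 \<bullet> u2 = 0 \<and> u1 \<bullet> u3 = 0 \<and> u2 \<bullet> u3 = 0"

lemma orthonormal3_inner: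
  assumes "orthonormal3 u1 u2 u3"
  shows "u1 \<bullet> u1 = 1" "u2 \<bullet> u2 = 1" "u3 \<bullet> u3 = 1" "u1 \<bullet> u2 = 0" "u1 \<bullet> u3 = 0" "u2 \<bullet> u3 = 0"
    "u2 \<bullet> u1 = 0" "u3 \<bullet> u1 = 0" "u3 \<bullet> u2 = 0"
  using assms by (auto simp: orthonormal3_def inner_commute)

lemma orthonormal3_lin_indep:
  assumes "orthonormal3 u1 u2 u3" "a *\<^sub>R u1 + b *\<^sub>R u2 + c *\<^sub>R u3 = 0"
  shows "a = 0 \<and> b = 0 \<and> c = 0"
proof -
  have "u1 \<bullet> (a *\<^sub>R u1 + b *\<^sub>R u2 + c *\<^sub>R u3) = 0" "u2 \<bullet> (a *\<^sub>R u1 + b *\<^sub>R u2 + c *\<^sub>R u3) = 0"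
    "u3 \<bullet> (a *\<^sub>R u1 + b *\<^sub>R u2 + c *\<^sub>R u3) = 0" using assms(2) by auto
  then show ?thesis by (simp add: inner_add_right orthonormal3_inner[OF assms(1)])
qed

lemma dim_sum_of_distinct_meeting_planes:
  fixes p1 q1 p2 q2 :: "'a::euclidean_space"
  assumes "lin_indep2 p1 q1" "lin_indep2 p2 q2"
    and distinct: "span {p1, q1} \<noteq> span {p2, q2}"
    and meet: "span {p1, q1} \<inter> span {p2, q2} \<noteq> {0}"
  shows "dim {p1, q1, p2, q2} = 3"
proof -
  let ?P1 = "span {p1, q1}" and ?P2 = "span {p2, q2}"
  have dims: "dim ?P1 = 2" "dim ?P2 = 2" using assms(1,2) by (simp_all add: dim_lin_indep2)
  have "span {p1, q1, p2, q2} = {x + y |x y. x \<in> ?P1 \<and> y \<in> ?P2}"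
    using span_Un[of "{p1, q1}" "{p2, q2}"] unfolding Un_insert_left Un_empty_left .
  then have "dim (span {p1, q1, p2, q2}) + dim (?P1 \<inter> ?P2) = dim ?P1 + dim ?P2"
    using dim_sums_Int[of ?P1 ?P2] by (simp only: subspace_span simp_thms)
  then have sum: "dim {p1, q1, p2, q2} + dim (?P1 \<inter> ?P2) = 4" using dims by simp
  have "dim (?P1 \<inter> ?P2) \<noteq> 0" using meet by (auto simp: dim_eq_0 span_zero)
  moreover have "dim (?P1 \<inter> ?P2) \<le> 2" using dim_subset[of "?P1 \<inter> ?P2" ?P1] dims by auto
  moreover have "dim (?P1 \<inter> ?P2) \<noteq> 2"
  proof
    assume "dim (?P1 \<inter> ?P2) = 2"
    then have "?P1 \<inter> ?P2 = ?P1" "?P1 \<inter> ?P2 = ?P2"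
      using subspace_dim_equal[of "?P1 \<inter> ?P2" ?P1] subspace_dim_equal[of "?P1 \<inter> ?P2" ?P2] dims
      by (simp_all add: subspace_inter)
    with distinct show False by simp
  qed
  ultimately show ?thesis using sum by linarith
qed

lemma plane_in_sum_of_meeting_planes:
  fixes p1 q1 p2 q2 p3 q3 :: "'a::euclidean_space"
  assumes "lin_indep2 p3 q3"
    and meet: "span {p1, q1} \<inter> span {p3, q3} \<noteq> {0}" "span {p2, q2} \<inter> span {p3, q3} \<noteq> {0}"
    and no_common_line: "span {p1, q1} \<inter> span {p2, q2} \<inter> span {p3, q3} = {0}"
  shows "span {p3, q3} \<subseteq> span {p1, q1, p2, q2}"
proof -
  let ?U = "span {p1, q1, p2, q2}" and ?P3 = "span {p3, q3}"
  obtain x y where x: "x \<noteq> 0" "x \<in> span {p1, q1}" "x \<in> ?P3" and y: "y \<noteq> 0" "y \<in> span {p2, q2}" "y \<in> ?P3"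
    using meet span_zero by blast
  have "x \<in> ?U" "y \<in> ?U"
    using x(2) y(2) span_mono[of "{p1, q1}" "{p1, q1, p2, q2}"] span_mono[of "{p2, q2}" "{p1, q1, p2, q2}"] by auto
  show ?thesis
  proof (cases "lin_indep2 x y")
    case True
    have "span {x, y} \<subseteq> ?P3" using x(3) y(3) by (simp add: span_minimal)
    then have "span {x, y} = ?P3"
      using subspace_dim_equal[of "span {x, y}" ?P3] dim_lin_indep2[OF True] dim_lin_indep2[OF assms(1)] by simp
    moreover have "span {x, y} \<subseteq> ?U" using \<open>x \<in> ?U\<close> \<open>y \<in> ?U\<close> by (simp add: span_minimal)
    ultimately show ?thesis by simp
  next
    case False
    then obtain c d where cd: "c *\<^sub>R x + d *\<^sub>R y = 0" "c \<noteq> 0 \<or> d \<noteq> 0" unfolding lin_indep2_def by blast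
    then have "c \<noteq> 0" using y(1) by auto
    moreover have "c *\<^sub>R x = (- d) *\<^sub>R y" using cd(1) by (simp add: eq_neg_iff_add_eq_0)
    ultimately have "x = (- d / c) *\<^sub>R y" by (subst eq_vector_fraction_iff) simp
    then have "x \<in> span {p2, q2}" using span_scale[OF y(2)] by presburger
    then show ?thesis using x no_common_line by blast
  qed
qed

lemma three_planes_in_orthonormal_span:
  fixes p1 q1 p2 q2 p3 q3 :: "'a::euclidean_space"
  assumes V: "subspace V" "p1 \<in> V" "q1 \<in> V" "p2 \<in> V" "q2 \<in> V"
    and indep: "lin_indep2 p1 q1" "lin_indep2 p2 q2" "lin_indep2 p3 q3"
    and distinct: "span {p1, q1} \<noteq> span {p2, q2}"
    and meet: "span {p1, q1} \<inter> span {p2, q2} \<noteq> {0}" "span {p1, q1} \<inter> span {p3, q3} \<noteq> {0}"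
      "span {p2, q2} \<inter> span {p3, q3} \<noteq> {0}"
    and no_common_line: "span {p1, q1} \<inter> span {p2, q2} \<inter> span {p3, q3} = {0}"
  obtains u1 u2 u3 where "u1 \<in> V" "u2 \<in> V" "u3 \<in> V" "orthonormal3 u1 u2 u3"
    "{p1, q1, p2, q2, p3, q3} \<subseteq> span {u1, u2, u3}"
proof -
  let ?U = "span {p1, q1, p2, q2}"
  have "dim ?U = 3" using dim_sum_of_distinct_meeting_planes[OF indep(1,2) distinct meet(1)] by simp
  obtain B where B: "B \<subseteq> ?U" "pairwise orthogonal B" "\<And>x. x \<in> B \<Longrightarrow> norm x = 1" "card B = 3" "span B = ?U"
    using orthonormal_basis_subspace[of ?U] \<open>dim ?U = 3\<close> by (metis subspace_span)
  then obtain u1 u2 u3 where u: "B = {u1, u2, u3}" "u1 \<noteq> u2" "u2 \<noteq> u3" "u1 \<noteq> u3"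
    by (metis card_3_iff)
  have "?U \<subseteq> V" using V by (simp add: span_minimal)
  then have "u1 \<in> V" "u2 \<in> V" "u3 \<in> V" using B(1) u(1) by auto
  moreover have "orthonormal3 u1 u2 u3"
    using B(2,3) u unfolding orthonormal3_def pairwise_def orthogonal_def by (auto simp: dot_square_norm)
  moreover have "span {p3, q3} \<subseteq> ?U"
    by (rule plane_in_sum_of_meeting_planes[OF indep(3) meet(2,3) no_common_line])
  then have "{p1, q1, p2, q2, p3, q3} \<subseteq> span {u1, u2, u3}"
    using B(5) u(1) by (auto intro: span_base)
  ultimately show thesis by (rule that)
qed

section \<open>The image of the restricted differential\<close>

definition form_scale :: "real \<Rightarrow> ('a \<Rightarrow> 'a \<Rightarrow> real) \<Rightarrow> 'a \<Rightarrow> 'a \<Rightarrow> real" where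
  "form_scale c \<omega> = (\<lambda>X Y. c * \<omega> X Y)"

lemma form_scale_apply [simp]: "form_scale c \<omega> X Y = c * \<omega> X Y"
  by (simp add: form_scale_def)

interpretation forms: vector_space "form_scale :: real \<Rightarrow> ('a \<Rightarrow> 'a \<Rightarrow> real) \<Rightarrow> _"
  by unfold_locales (auto simp: fun_eq_iff algebra_simps)

lemma dim_forms2_eq_forms_dim: "dim_forms2 W = forms.dim W"
  unfolding dim_forms2_def form_scale_def[abs_def] ..

lemma forms_span_triple:
  assumes "\<omega> \<in> forms.span {\<alpha>, \<beta>, \<gamma>}"
  obtains a b c where "\<omega> = form_scale a \<alpha> + form_scale b \<beta> + form_scale c \<gamma>"
proof -
  obtain a where "\<omega> - form_scale a \<alpha> \<in> forms.span {\<beta>, \<gamma>}" using assms by (auto simp: forms.span_insert[of \<alpha>])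
  then obtain b where "\<omega> - form_scale a \<alpha> - form_scale b \<beta> \<in> forms.span {\<gamma>}" by (auto simp: forms.span_insert[of \<beta>])
  then obtain c where "\<omega> - form_scale a \<alpha> - form_scale b \<beta> = form_scale c \<gamma>" by (auto simp: forms.span_singleton)
  then have "\<omega> = form_scale a \<alpha> + form_scale b \<beta> + form_scale c \<gamma>" by (simp add: algebra_simps)
  then show thesis by (rule that)
qed

lemma wedge22_add_self:
  "wedge22 (\<eta> + \<mu>) (\<eta> + \<mu>) a b c d = wedge22 \<eta> \<eta> a b c d + wedge22 \<mu> \<mu> a b c d + 2 * wedge22 \<eta> \<mu> a b c d"
  by (simp add: wedge22_def algebra_simps)

lemma forms_subspace_wedge12_eq_0:
  "forms.subspace {\<eta>. \<forall>a\<in>V. \<forall>b\<in>V. \<forall>c\<in>V. wedge12 \<sigma> \<eta> a b c = 0}"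
  unfolding forms.subspace_def by (auto simp: wedge12_def algebra_simps) (metis distrib_left)

lemma restrict2_apply: "restrict2 V \<omega> X Y = (if X \<in> V \<and> Y \<in> V then \<omega> X Y else 0)"
  by (simp add: restrict2_def)

lemma restrict2_eqI: "(\<And>X Y. X \<in> V \<Longrightarrow> Y \<in> V \<Longrightarrow> \<omega> X Y = \<omega>' X Y) \<Longrightarrow> restrict2 V \<omega> = restrict2 V \<omega>'"
  by (simp add: restrict2_def fun_eq_iff)

lemma NtH_apply: "NtH br V \<xi> X Y = (if X \<in> V \<and> Y \<in> V then - \<xi> (br X Y) else 0)"
  by (simp add: NtH_def restrict2_def CE_d_def)

lemma bilinear_CE_d:
  assumes "bilinear br" "linear \<xi>" shows "bilinear (CE_d br \<xi>)"
  using assms unfolding CE_d_def bilinear_def[of "\<lambda>X Y. - \<xi> (br X Y)"]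
  by (auto intro!: linearI simp: bilinear_ladd bilinear_radd bilinear_lmul bilinear_rmul linear_add linear_scale)

lemma forms_subspace_NtH_image: "forms.subspace (NtH br V ` annihilator V)"
  unfolding forms.subspace_def
proof (intro conjI ballI allI)
  have "(\<lambda>x. 0) \<in> annihilator V" "NtH br V (\<lambda>x. 0) = 0"
    by (auto intro: linearI simp: annihilator_def fun_eq_iff NtH_apply)
  then show "0 \<in> NtH br V ` annihilator V" by (metis image_eqI)
next
  fix \<eta> \<mu> assume "\<eta> \<in> NtH br V ` annihilator V" "\<mu> \<in> NtH br V ` annihilator V"
  then obtain \<xi> \<zeta> where "\<xi> \<in> annihilator V" "\<zeta> \<in> annihilator V" "\<eta> = NtH br V \<xi>" "\<mu> = NtH br V \<zeta>"
    by blast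
  then have "(\<lambda>x. \<xi> x + \<zeta> x) \<in> annihilator V" "NtH br V (\<lambda>x. \<xi> x + \<zeta> x) = \<eta> + \<mu>"
    by (auto intro!: linearI simp: annihilator_def fun_eq_iff NtH_apply linear_add linear_scale algebra_simps)
  then show "\<eta> + \<mu> \<in> NtH br V ` annihilator V" by (metis image_eqI)
next
  fix c \<eta> assume "\<eta> \<in> NtH br V ` annihilator V"
  then obtain \<xi> where "\<xi> \<in> annihilator V" "\<eta> = NtH br V \<xi>" by blast
  then have "(\<lambda>x. c * \<xi> x) \<in> annihilator V" "NtH br V (\<lambda>x. c * \<xi> x) = form_scale c \<eta>"
    by (auto intro!: linearI simp: annihilator_def fun_eq_iff NtH_apply linear_add linear_scale algebra_simps)
  then show "form_scale c \<eta> \<in> NtH br V ` annihilator V" by (metis image_eqI)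
qed

definition simple_form_on :: "'a set \<Rightarrow> ('a \<Rightarrow> 'a \<Rightarrow> real) \<Rightarrow> bool" where
  "simple_form_on V \<eta> \<longleftrightarrow> (\<forall>a\<in>V. \<forall>b\<in>V. \<forall>c\<in>V. \<forall>d\<in>V. wedge22 \<eta> \<eta> a b c d = 0)"

lemma restrict2_simple_eq_plane_form:
  fixes f :: "'a::euclidean_space \<Rightarrow> 'a \<Rightarrow> real"
  assumes "bilinear f" "subspace V" "restrict2 V f \<noteq> 0" "simple_form_on V (restrict2 V f)"
  obtains p q where "p \<in> V" "q \<in> V" "lin_indep2 p q" "restrict2 V f = restrict2 V (plane_form p q)"
proof -
  obtain a b where ab: "a \<in> V" "b \<in> V" "f a b \<noteq> 0"
    using assms(3) by (auto simp: fun_eq_iff restrict2_apply split: if_splits)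
  have simple: "\<forall>a\<in>V. \<forall>b\<in>V. \<forall>c\<in>V. \<forall>d\<in>V. wedge22 f f a b c d = 0"
    using assms(4) by (simp add: simple_form_on_def wedge22_def restrict2_apply)
  obtain p q where "p \<in> V" "q \<in> V" "lin_indep2 p q"
    "\<And>x y. x \<in> V \<Longrightarrow> y \<in> V \<Longrightarrow> f x y = plane_form p q x y"
    using simple_bilinear_eq_plane_form[OF assms(1,2) simple ab] by blast
  then show thesis using that restrict2_eqI by metis
qed

lemma NtH_image_eq_span_plane_forms:
  fixes br :: "'a::euclidean_space \<Rightarrow> 'a \<Rightarrow> 'a"
  assumes "bilinear br" "subspace V"
    and rank3: "forms.dim (NtH br V ` annihilator V) = 3"
    and simple: "\<forall>\<eta>\<in>NtH br V ` annihilator V. simple_form_on V \<eta>"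
  obtains p1 q1 p2 q2 p3 q3 where "p1 \<in> V" "q1 \<in> V" "p2 \<in> V" "q2 \<in> V" "p3 \<in> V" "q3 \<in> V"
    "lin_indep2 p1 q1" "lin_indep2 p2 q2" "lin_indep2 p3 q3"
    "NtH br V ` annihilator V = forms.span {restrict2 V (plane_form p1 q1),
       restrict2 V (plane_form p2 q2), restrict2 V (plane_form p3 q3)}"
proof -
  let ?W = "NtH br V ` annihilator V"
  have rep: "\<exists>p q. p \<in> V \<and> q \<in> V \<and> lin_indep2 p q \<and> \<eta> = restrict2 V (plane_form p q)"
    if \<eta>: "\<eta> \<in> ?W" "\<eta> \<noteq> 0" for \<eta>
  proof -
    obtain \<xi> where "\<xi> \<in> annihilator V" "\<eta> = restrict2 V (CE_d br \<xi>)"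
      using \<eta>(1) by (auto simp: NtH_def)
    moreover from this have "bilinear (CE_d br \<xi>)"
      using assms(1) by (simp add: bilinear_CE_d annihilator_def)
    ultimately show ?thesis using restrict2_simple_eq_plane_form[OF _ assms(2)] \<eta> simple by metis
  qed
  obtain B where B: "B \<subseteq> ?W" "forms.independent B" "?W \<subseteq> forms.span B" "card B = 3"
    using forms.basis_exists rank3 by metis
  then obtain \<eta>1 \<eta>2 \<eta>3 where B_eq: "B = {\<eta>1, \<eta>2, \<eta>3}" by (metis card_3_iff)
  have "forms.span B = ?W"
    using B forms.span_minimal[OF B(1) forms_subspace_NtH_image] by blast
  moreover have "0 \<notin> B" using B(2) forms.dependent_zero by blast
  ultimately have "\<eta>1 \<in> ?W" "\<eta>2 \<in> ?W" "\<eta>3 \<in> ?W" "\<eta>1 \<noteq> 0" "\<eta>2 \<noteq> 0" "\<eta>3 \<noteq> 0"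
    using B(1) B_eq by auto
  then obtain p1 q1 p2 q2 p3 q3 where "p1 \<in> V" "q1 \<in> V" "lin_indep2 p1 q1" "\<eta>1 = restrict2 V (plane_form p1 q1)"
    "p2 \<in> V" "q2 \<in> V" "lin_indep2 p2 q2" "\<eta>2 = restrict2 V (plane_form p2 q2)"
    "p3 \<in> V" "q3 \<in> V" "lin_indep2 p3 q3" "\<eta>3 = restrict2 V (plane_form p3 q3)"
    using rep by meson
  with \<open>forms.span B = ?W\<close> B_eq show thesis using that by simp
qed

lemma planes_meet_if_simple_subspace:
  fixes p q r s :: "'a::euclidean_space"
  assumes W: "forms.subspace W" "\<forall>\<eta>\<in>W. simple_form_on V \<eta>"
    and in_W: "restrict2 V (plane_form p q) \<in> W" "restrict2 V (plane_form r s) \<in> W"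
    and V: "subspace V" "p \<in> V" "q \<in> V" "r \<in> V" "s \<in> V"
    and indep: "lin_indep2 p q" "lin_indep2 r s"
  shows "span {p, q} \<inter> span {r, s} \<noteq> {0}"
proof -
  let ?\<eta> = "restrict2 V (plane_form p q)" and ?\<mu> = "restrict2 V (plane_form r s)"
  have "?\<eta> + ?\<mu> \<in> W" using W(1) in_W by (rule forms.subspace_add)
  \<comment> \<open>simplicity of the sum polarizes to the vanishing of the wedge product of the summands\<close>
  then have "wedge22 ?\<eta> ?\<mu> a b c d = 0" if "a \<in> V" "b \<in> V" "c \<in> V" "d \<in> V" for a b c d
    using W(2) in_W that wedge22_add_self[of ?\<eta> ?\<mu> a b c d] unfolding simple_form_on_def by auto
  then have "\<forall>a\<in>V. \<forall>b\<in>V. \<forall>c\<in>V. \<forall>d\<in>V. wedge22 (plane_form p q) (plane_form r s) a b c d = 0"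
    by (simp add: wedge22_def restrict2_apply)
  then obtain z where "z \<noteq> 0" "z \<in> span {p, q}" "z \<in> span {r, s}"
    using planes_meet_if_wedge22_eq_0[OF V indep] by blast
  then show ?thesis by blast
qed

lemma planes_distinct_if_forms_dim3:
  assumes "forms.dim {restrict2 V (plane_form p1 q1), restrict2 V (plane_form p2 q2), \<theta>} = 3"
  shows "span {p1, q1} \<noteq> span {p2, q2}"
proof
  let ?\<theta>1 = "restrict2 V (plane_form p1 q1)" and ?\<theta>2 = "restrict2 V (plane_form p2 q2)"
  assume "span {p1, q1} = span {p2, q2}"
  then have "p2 \<in> span {p1, q1}" "q2 \<in> span {p1, q1}" by (auto intro: span_base)
  then obtain c where "\<And>x y. plane_form p2 q2 x y = c * plane_form p1 q1 x y"
    using plane_form_span_pair by blast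
  then have "?\<theta>2 = form_scale c ?\<theta>1" by (simp add: fun_eq_iff restrict2_apply)
  then have "{?\<theta>1, ?\<theta>2, \<theta>} \<subseteq> forms.span {?\<theta>1, \<theta>}"
    by (auto intro: forms.span_base forms.span_scale)
  then have "forms.dim {?\<theta>1, ?\<theta>2, \<theta>} \<le> card {?\<theta>1, \<theta>}" by (simp add: forms.dim_le_card)
  also have "\<dots> \<le> 2" by (simp add: card_insert_if)
  finally show False using assms by simp
qed

lemma wedge12_common_line_eq_0:
  assumes "\<eta> \<in> forms.span {restrict2 V (plane_form p1 q1), restrict2 V (plane_form p2 q2),
      restrict2 V (plane_form p3 q3)}"
    and z: "z \<in> span {p1, q1}" "z \<in> span {p2, q2}" "z \<in> span {p3, q3}"
    and abc: "a \<in> V" "b \<in> V" "c \<in> V"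
  shows "wedge12 (\<lambda>x. z \<bullet> x) \<eta> a b c = 0"
proof -
  let ?S = "{\<eta>. \<forall>a\<in>V. \<forall>b\<in>V. \<forall>c\<in>V. wedge12 (\<lambda>x. z \<bullet> x) \<eta> a b c = 0}"
  have "restrict2 V (plane_form p q) \<in> ?S" if "z \<in> span {p, q}" for p q
    using wedge12_plane_form_eq_0[OF that] by (simp add: wedge12_def restrict2_apply)
  then have "forms.span {restrict2 V (plane_form p1 q1), restrict2 V (plane_form p2 q2),
      restrict2 V (plane_form p3 q3)} \<subseteq> ?S"
    using z by (intro forms.span_minimal forms_subspace_wedge12_eq_0) auto
  then show ?thesis using assms(1) abc by blast
qed

lemma span_plane_forms_eq_span_orthonormal:
  assumes W: "W = forms.span {restrict2 V (plane_form p1 q1), restrict2 V (plane_form p2 q2),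
      restrict2 V (plane_form p3 q3)}" "forms.dim W = 3"
    and u: "{p1, q1, p2, q2, p3, q3} \<subseteq> span {u1, u2, u3}"
  shows "W = forms.span {restrict2 V (plane_form u2 u3), restrict2 V (plane_form u3 u1),
      restrict2 V (plane_form u1 u2)}" (is "W = forms.span ?\<Theta>")
proof
  have "restrict2 V (plane_form p q) \<in> forms.span ?\<Theta>" if pq: "p \<in> span {u1, u2, u3}" "q \<in> span {u1, u2, u3}" for p q
  proof -
    obtain a b c where "\<And>x y. plane_form p q x y =
        a * plane_form u2 u3 x y + b * plane_form u3 u1 x y + c * plane_form u1 u2 x y"
      using plane_form_span_triple[OF pq] by blast
    then have "restrict2 V (plane_form p q) = form_scale a (restrict2 V (plane_form u2 u3))
        + form_scale b (restrict2 V (plane_form u3 u1)) + form_scale c (restrict2 V (plane_form u1 u2))"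
      by (simp add: fun_eq_iff restrict2_apply)
    moreover have "restrict2 V (plane_form u2 u3) \<in> forms.span ?\<Theta>" "restrict2 V (plane_form u3 u1) \<in> forms.span ?\<Theta>"
      "restrict2 V (plane_form u1 u2) \<in> forms.span ?\<Theta>" by (simp_all add: forms.span_base)
    ultimately show ?thesis by (simp add: forms.span_add forms.span_scale)
  qed
  then show W_sub: "W \<subseteq> forms.span ?\<Theta>"
    unfolding W(1) using u by (intro forms.span_minimal) auto
  obtain B where B: "B \<subseteq> W" "forms.independent B" "card B = 3"
    using forms.basis_exists W(2) by metis
  \<comment> \<open>a generator outside W would extend B to four independent forms in a span of three\<close>
  have "\<theta> \<in> W" if "\<theta> \<in> ?\<Theta>" for \<theta>
  proof (rule ccontr)
    assume "\<theta> \<notin> W"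
    moreover have "forms.span B \<subseteq> W" using B(1) W(1) by (simp add: forms.span_minimal)
    ultimately have "forms.independent (insert \<theta> B)" using B(2) forms.independent_insertI by blast
    moreover have "insert \<theta> B \<subseteq> forms.span ?\<Theta>" using that B(1) W_sub by (auto intro: forms.span_base)
    ultimately have "card (insert \<theta> B) \<le> card ?\<Theta>"
      using forms.independent_span_bound[of ?\<Theta>] by simp
    also have "\<dots> \<le> 3" by (simp add: card_insert_if)
    moreover have "finite B" using B(3) by (intro card_ge_0_finite) simp
    then have "card (insert \<theta> B) = 4" using B(1,3) \<open>\<theta> \<notin> W\<close> by (subst card_insert_disjoint) auto
    ultimately show False by simp
  qed
  then show "forms.span ?\<Theta> \<subseteq> W" unfolding W(1) by (intro forms.span_minimal) auto
qed

lemma NtH_image_eq_span_orthonormal_plane_forms: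
  fixes br :: "'a::euclidean_space \<Rightarrow> 'a \<Rightarrow> 'a"
  assumes "bilinear br" "subspace V"
    and rank3: "forms.dim (NtH br V ` annihilator V) = 3"
    and simple: "\<forall>\<eta>\<in>NtH br V ` annihilator V. simple_form_on V \<eta>"
    and no_divisor: "\<not> (\<exists>\<sigma>. linear \<sigma> \<and> (\<exists>v\<in>V. \<sigma> v \<noteq> 0) \<and>
      (\<forall>\<eta>\<in>NtH br V ` annihilator V. \<forall>a\<in>V. \<forall>b\<in>V. \<forall>c\<in>V. wedge12 \<sigma> \<eta> a b c = 0))"
  obtains u1 u2 u3 where "u1 \<in> V" "u2 \<in> V" "u3 \<in> V" "orthonormal3 u1 u2 u3"
    "NtH br V ` annihilator V = forms.span {restrict2 V (plane_form u2 u3),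
       restrict2 V (plane_form u3 u1), restrict2 V (plane_form u1 u2)}"
proof -
  let ?W = "NtH br V ` annihilator V"
  obtain p1 q1 p2 q2 p3 q3 where V: "p1 \<in> V" "q1 \<in> V" "p2 \<in> V" "q2 \<in> V" "p3 \<in> V" "q3 \<in> V"
    and indep: "lin_indep2 p1 q1" "lin_indep2 p2 q2" "lin_indep2 p3 q3"
    and W: "?W = forms.span {restrict2 V (plane_form p1 q1), restrict2 V (plane_form p2 q2),
       restrict2 V (plane_form p3 q3)}"
    using NtH_image_eq_span_plane_forms[OF assms(1-4)] by blast
  have in_W: "restrict2 V (plane_form p1 q1) \<in> ?W" "restrict2 V (plane_form p2 q2) \<in> ?W"
    "restrict2 V (plane_form p3 q3) \<in> ?W" unfolding W by (simp_all add: forms.span_base)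
  note meet = planes_meet_if_simple_subspace[OF forms_subspace_NtH_image simple _ _ assms(2)]
  have "span {p1, q1} \<inter> span {p2, q2} \<noteq> {0}" "span {p1, q1} \<inter> span {p3, q3} \<noteq> {0}"
    "span {p2, q2} \<inter> span {p3, q3} \<noteq> {0}" using meet in_W V indep by simp_all
  moreover have "span {p1, q1} \<noteq> span {p2, q2}"
    using rank3 unfolding W forms.dim_span by (rule planes_distinct_if_forms_dim3)
  moreover have "span {p1, q1} \<inter> span {p2, q2} \<inter> span {p3, q3} = {0}"
  proof -
    have "z = 0" if z: "z \<in> span {p1, q1}" "z \<in> span {p2, q2}" "z \<in> span {p3, q3}" for z
    proof -
      have "\<forall>\<eta>\<in>?W. \<forall>a\<in>V. \<forall>b\<in>V. \<forall>c\<in>V. wedge12 (\<lambda>x. z \<bullet> x) \<eta> a b c = 0"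
        unfolding W using wedge12_common_line_eq_0[OF _ z] by blast
      moreover have "linear (\<lambda>x. z \<bullet> x)" by (intro linearI) (simp_all add: inner_add_right)
      ultimately have "\<forall>v\<in>V. z \<bullet> v = 0" using no_divisor by blast
      moreover have "z \<in> V" using z(1) V(1,2) assms(2) span_minimal[of "{p1, q1}" V] by auto
      ultimately show "z = 0" by (metis inner_eq_zero_iff)
    qed
    then show ?thesis by (auto simp: span_zero)
  qed
  ultimately obtain u1 u2 u3 where "u1 \<in> V" "u2 \<in> V" "u3 \<in> V" "orthonormal3 u1 u2 u3"
    "{p1, q1, p2, q2, p3, q3} \<subseteq> span {u1, u2, u3}"
    using three_planes_in_orthonormal_span[OF assms(2) V(1-4) indep] by blast
  with W rank3 show thesis using that span_plane_forms_eq_span_orthonormal by metis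
qed

section \<open>An isomorphism of V onto its orthogonal complement\<close>

lemma dim_complement_of_span_triple:
  fixes S K :: "'a::euclidean_space set"
  assumes "subspace S" "subspace K" "K \<subseteq> S" "k1 \<in> S" "k2 \<in> S" "k3 \<in> S"
    and spanning: "\<And>s. s \<in> S \<Longrightarrow> \<exists>c1 c2 c3. s - (c1 *\<^sub>R k1 + c2 *\<^sub>R k2 + c3 *\<^sub>R k3) \<in> K"
    and indep: "\<And>c1 c2 c3. c1 *\<^sub>R k1 + c2 *\<^sub>R k2 + c3 *\<^sub>R k3 \<in> K \<Longrightarrow> c1 = 0 \<and> c2 = 0 \<and> c3 = 0"
  shows "dim K + 3 = dim S"
proof -
  let ?T = "span {k1, k2, k3}"
  have "\<forall>a b c. a *\<^sub>R k1 + b *\<^sub>R k2 + c *\<^sub>R k3 = 0 \<longrightarrow> a = 0 \<and> b = 0 \<and> c = 0"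
    using indep subspace_0[OF assms(2)] by metis
  then have "dim ?T = 3" by (simp add: dim_lin_indep3)
  have "{x + y |x y. x \<in> K \<and> y \<in> ?T} = S"
  proof
    have "?T \<subseteq> S" using assms by (simp add: span_minimal)
    then show "{x + y |x y. x \<in> K \<and> y \<in> ?T} \<subseteq> S" using assms(1,3) by (auto intro: subspace_add)
    show "S \<subseteq> {x + y |x y. x \<in> K \<and> y \<in> ?T}"
    proof
      fix s assume "s \<in> S"
      then obtain c1 c2 c3 where "s - (c1 *\<^sub>R k1 + c2 *\<^sub>R k2 + c3 *\<^sub>R k3) \<in> K" using spanning by blast
      moreover have "c1 *\<^sub>R k1 + c2 *\<^sub>R k2 + c3 *\<^sub>R k3 \<in> ?T" unfolding span_triple_iff by blast
      ultimately show "s \<in> {x + y |x y. x \<in> K \<and> y \<in> ?T}" by force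
    qed
  qed
  moreover have "K \<inter> ?T = {0}"
  proof
    show "K \<inter> ?T \<subseteq> {0}"
    proof
      fix x assume "x \<in> K \<inter> ?T"
      then obtain c1 c2 c3 where "x = c1 *\<^sub>R k1 + c2 *\<^sub>R k2 + c3 *\<^sub>R k3" "x \<in> K"
        by (auto simp: span_triple_iff)
      then show "x \<in> {0}" using indep by force
    qed
  qed (simp add: assms(2) subspace_0 span_zero)
  moreover have "dim {0::'a} = 0" by (simp add: dim_eq_0)
  ultimately show ?thesis using dim_sums_Int[OF assms(2) subspace_span[of "{k1, k2, k3}"]] \<open>dim ?T = 3\<close> by simp
qed

lemma orthonormal3_complement:
  fixes V :: "'a::euclidean_space set"
  assumes "subspace V" "u1 \<in> V" "u2 \<in> V" "u3 \<in> V" "orthonormal3 u1 u2 u3"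
  shows "dim (V \<inter> (span {u1, u2, u3})\<^sup>\<bottom>) + 3 = dim V"
    and "z \<in> V \<Longrightarrow> z - ((u1 \<bullet> z) *\<^sub>R u1 + (u2 \<bullet> z) *\<^sub>R u2 + (u3 \<bullet> z) *\<^sub>R u3) \<in> V \<inter> (span {u1, u2, u3})\<^sup>\<bottom>"
proof -
  let ?U = "span {u1, u2, u3}"
  have "?U \<subseteq> V" using assms by (simp add: span_minimal)
  moreover have "{y \<in> V. \<forall>x\<in>?U. orthogonal x y} = V \<inter> ?U\<^sup>\<bottom>" by (auto simp: orthogonal_comp_def)
  ultimately have "dim (V \<inter> ?U\<^sup>\<bottom>) + dim ?U = dim V"
    using dim_subspace_orthogonal_to_vectors[OF subspace_span assms(1), of "{u1, u2, u3}"] by (simp only:)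
  moreover have "\<forall>a b c. a *\<^sub>R u1 + b *\<^sub>R u2 + c *\<^sub>R u3 = 0 \<longrightarrow> a = 0 \<and> b = 0 \<and> c = 0"
    using orthonormal3_lin_indep[OF assms(5)] by blast
  then have "dim ?U = 3" using dim_lin_indep3 by (simp only: dim_span)
  ultimately show "dim (V \<inter> ?U\<^sup>\<bottom>) + 3 = dim V" by simp
next
  let ?p = "(u1 \<bullet> z) *\<^sub>R u1 + (u2 \<bullet> z) *\<^sub>R u2 + (u3 \<bullet> z) *\<^sub>R u3"
  assume "z \<in> V"
  have "?p \<in> V" by (intro subspace_add[OF assms(1)] subspace_scale[OF assms(1)] assms(2-4))
  with \<open>z \<in> V\<close> have "z - ?p \<in> V" by (rule subspace_diff[OF assms(1)])
  moreover have "x \<bullet> (z - ?p) = 0" if x: "x \<in> span {u1, u2, u3}" for x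
  proof -
    obtain a b c where "x = a *\<^sub>R u1 + b *\<^sub>R u2 + c *\<^sub>R u3" using x span_triple_iff by blast
    then show ?thesis
      by (simp add: inner_diff_right inner_add_left inner_add_right orthonormal3_inner[OF assms(5)])
  qed
  ultimately show "z - ?p \<in> V \<inter> (span {u1, u2, u3})\<^sup>\<bottom>"
    unfolding orthogonal_comp_def orthogonal_def by blast
qed

lemma linear_iso_extending_orthonormal3:
  fixes V S K :: "'a::euclidean_space set"
  assumes V: "subspace V" "u1 \<in> V" "u2 \<in> V" "u3 \<in> V" "orthonormal3 u1 u2 u3"
    and S: "subspace S" "subspace K" "K \<subseteq> S" "k1 \<in> S" "k2 \<in> S" "k3 \<in> S" "dim V = dim S"
    and spanning: "\<And>s. s \<in> S \<Longrightarrow> \<exists>c1 c2 c3. s - (c1 *\<^sub>R k1 + c2 *\<^sub>R k2 + c3 *\<^sub>R k3) \<in> K"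
    and indep: "\<And>c1 c2 c3. c1 *\<^sub>R k1 + c2 *\<^sub>R k2 + c3 *\<^sub>R k3 \<in> K \<Longrightarrow> c1 = 0 \<and> c2 = 0 \<and> c3 = 0"
  obtains \<Psi> where "linear \<Psi>" "\<Psi> ` V = S" "\<And>z. z \<in> V \<Longrightarrow> \<Psi> z = 0 \<Longrightarrow> z = 0"
    "\<And>z. z \<in> V \<Longrightarrow> \<Psi> z - ((u1 \<bullet> z) *\<^sub>R k1 + (u2 \<bullet> z) *\<^sub>R k2 + (u3 \<bullet> z) *\<^sub>R k3) \<in> K"
proof -
  let ?V0 = "V \<inter> (span {u1, u2, u3})\<^sup>\<bottom>"
  let ?c = "\<lambda>z. (u1 \<bullet> z) *\<^sub>R k1 + (u2 \<bullet> z) *\<^sub>R k2 + (u3 \<bullet> z) *\<^sub>R k3"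
  let ?p = "\<lambda>z. (u1 \<bullet> z) *\<^sub>R u1 + (u2 \<bullet> z) *\<^sub>R u2 + (u3 \<bullet> z) *\<^sub>R u3"
  note V0 = orthonormal3_complement[OF V]
  have "dim ?V0 = dim K"
    using V0(1) dim_complement_of_span_triple[OF S(1-6) spanning indep] S(7) by simp
  then obtain \<Phi> where \<Phi>: "linear \<Phi>" "\<Phi> ` ?V0 = K" "\<And>x. x \<in> ?V0 \<Longrightarrow> norm (\<Phi> x) = norm x"
    using isometries_subspaces[of ?V0 K] S(2) V(1) by (metis subspace_inter subspace_orthogonal_comp)
  define \<Psi> where "\<Psi> z = ?c z + \<Phi> (z - ?p z)" for z
  have lin: "linear ?p" "linear ?c"
    by (auto intro!: linearI simp: inner_add_right scaleR_add_left algebra_simps)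
  have "linear (\<lambda>z. \<Phi> (z - ?p z))"
    using linear_compose[OF linear_compose_sub[OF linear_ident lin(1)] \<Phi>(1)] by (simp add: o_def)
  then have "linear \<Psi>" unfolding \<Psi>_def[abs_def] by (rule linear_compose_add[OF lin(2)])
  have V0_mem: "z - ?p z \<in> ?V0" if "z \<in> V" for z using V0(2)[OF that] .
  have c_in_S: "?c z \<in> S" for z using S(1,4-6) by (intro subspace_add subspace_scale) auto
  have \<Psi>_K: "\<Psi> z - ?c z \<in> K" if "z \<in> V" for z
    unfolding \<Psi>_def using \<Phi>(2) V0_mem[OF that] by auto
  have "\<Psi> z \<in> S" if "z \<in> V" for z
    using subspace_add[OF S(1) c_in_S[of z] subsetD[OF S(3) \<Psi>_K[OF that]]] by simp
  then have "\<Psi> ` V \<subseteq> S" by blast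
  moreover have "S \<subseteq> \<Psi> ` V"
  proof
    fix s assume "s \<in> S"
    then obtain a b c where "s - (a *\<^sub>R k1 + b *\<^sub>R k2 + c *\<^sub>R k3) \<in> K" using spanning by blast
    then have "s - (a *\<^sub>R k1 + b *\<^sub>R k2 + c *\<^sub>R k3) \<in> \<Phi> ` ?V0" by (simp only: \<Phi>(2))
    then obtain z0 where z0: "z0 \<in> ?V0" "\<Phi> z0 = s - (a *\<^sub>R k1 + b *\<^sub>R k2 + c *\<^sub>R k3)"
      by (auto simp: image_iff)
    have "u1 \<bullet> z0 = 0" "u2 \<bullet> z0 = 0" "u3 \<bullet> z0 = 0"
      using z0(1) by (auto simp: orthogonal_comp_def orthogonal_def intro: span_base)
    then have "\<Psi> (a *\<^sub>R u1 + b *\<^sub>R u2 + c *\<^sub>R u3 + z0) = s"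
      using z0(2) by (simp add: \<Psi>_def inner_add_right orthonormal3_inner[OF V(5)])
    moreover have "a *\<^sub>R u1 + b *\<^sub>R u2 + c *\<^sub>R u3 + z0 \<in> V"
      using V z0(1) by (auto intro!: subspace_add subspace_scale)
    ultimately show "s \<in> \<Psi> ` V" by (rule image_eqI[OF sym])
  qed
  moreover have "z = 0" if z: "z \<in> V" "\<Psi> z = 0" for z
  proof -
    have "?c z = - \<Phi> (z - ?p z)" unfolding eq_neg_iff_add_eq_0 using z(2) by (simp only: \<Psi>_def)
    moreover have "- \<Phi> (z - ?p z) \<in> K" using \<Phi>(2) V0_mem[OF z(1)] S(2) by (auto intro: subspace_neg)
    ultimately have "?c z \<in> K" by simp
    then have "u1 \<bullet> z = 0 \<and> u2 \<bullet> z = 0 \<and> u3 \<bullet> z = 0" using indep[of "u1 \<bullet> z" "u2 \<bullet> z" "u3 \<bullet> z"] by simp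
    then have "norm (\<Phi> z) = 0" and "z \<in> ?V0" using z V0_mem[OF z(1)] by (simp_all add: \<Psi>_def)
    then show "z = 0" using \<Phi>(3) by (metis norm_eq_zero)
  qed
  ultimately show thesis using \<open>linear \<Psi>\<close> \<Psi>_K by (intro that[of \<Psi>]) auto
qed

lemma annihilator_eq_inner:
  fixes V :: "'a::euclidean_space set"
  shows "annihilator V = (\<lambda>k x. k \<bullet> x) ` (V\<^sup>\<bottom>)"
proof
  show "annihilator V \<subseteq> (\<lambda>k x. k \<bullet> x) ` (V\<^sup>\<bottom>)"
  proof
    fix \<xi> assume "\<xi> \<in> annihilator V"
    then have "linear \<xi>" "\<forall>v\<in>V. \<xi> v = 0" by (auto simp: annihilator_def)
    then have "\<xi> = (\<lambda>x. adjoint \<xi> 1 \<bullet> x)" using linear_functional_eq_inner by blast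
    moreover from this have "adjoint \<xi> 1 \<in> V\<^sup>\<bottom>"
      using \<open>\<forall>v\<in>V. \<xi> v = 0\<close> by (metis in_orthogonal_comp_iff)
    ultimately show "\<xi> \<in> (\<lambda>k x. k \<bullet> x) ` (V\<^sup>\<bottom>)" by blast
  qed
  show "(\<lambda>k x. k \<bullet> x) ` (V\<^sup>\<bottom>) \<subseteq> annihilator V"
    by (auto intro!: linearI simp: annihilator_def in_orthogonal_comp_iff inner_add_right)
qed

lemma dim_orthogonal_comp:
  fixes V :: "'a::euclidean_space set"
  assumes "subspace V" shows "dim (V\<^sup>\<bottom>) + dim V = DIM('a)"
proof -
  have "{y \<in> UNIV. \<forall>x\<in>V. orthogonal x y} = V\<^sup>\<bottom>" by (auto simp: orthogonal_comp_def)
  then show ?thesis using dim_subspace_orthogonal_to_vectors[OF assms subspace_UNIV] by (simp add: dim_UNIV)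
qed

definition volume_form :: "'a::real_inner \<Rightarrow> 'a \<Rightarrow> 'a \<Rightarrow> 'a \<Rightarrow> 'a \<Rightarrow> 'a \<Rightarrow> real" where
  "volume_form u1 u2 u3 X Y Z =
     (u1 \<bullet> X) * plane_form u2 u3 Y Z + (u2 \<bullet> X) * plane_form u3 u1 Y Z + (u3 \<bullet> X) * plane_form u1 u2 Y Z"

lemma volume_form_alternating:
  "volume_form u1 u2 u3 Y X Z = - volume_form u1 u2 u3 X Y Z"
  "volume_form u1 u2 u3 X Z Y = - volume_form u1 u2 u3 X Y Z"
  "volume_form u1 u2 u3 Z Y X = - volume_form u1 u2 u3 X Y Z"
  by (simp_all add: volume_form_def plane_form_def algebra_simps)

lemma alternating_if_eq_volume_form:
  assumes vol: "\<And>X Y Z. X \<in> V \<Longrightarrow> Y \<in> V \<Longrightarrow> Z \<in> V \<Longrightarrow> \<Psi> Z \<bullet> br X Y = - volume_form u1 u2 u3 Z X Y"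
    and XYZ: "X \<in> V" "Y \<in> V" "Z \<in> V"
  shows "\<Psi> Z \<bullet> br X Y = - (\<Psi> Z \<bullet> br Y X) \<and> \<Psi> Z \<bullet> br X Y = - (\<Psi> Y \<bullet> br X Z) \<and>
    \<Psi> Z \<bullet> br X Y = - (\<Psi> X \<bullet> br Z Y)"
  using volume_form_alternating(1-3)[of u1 u2 u3 Z X Y] by (simp add: vol XYZ)

lemma NtH_image_inner_representative:
  fixes br :: "'a::euclidean_space \<Rightarrow> 'a \<Rightarrow> 'a"
  assumes "\<omega> \<in> NtH br V ` annihilator V"
  obtains k where "k \<in> V\<^sup>\<bottom>" "\<And>x y. x \<in> V \<Longrightarrow> y \<in> V \<Longrightarrow> k \<bullet> br x y = - \<omega> x y"
  using assms unfolding annihilator_eq_inner by (auto simp: NtH_apply)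

lemma inner_bracket_in_span_plane_forms:
  fixes br :: "'a::euclidean_space \<Rightarrow> 'a \<Rightarrow> 'a"
  assumes W: "NtH br V ` annihilator V = forms.span {restrict2 V (plane_form u2 u3),
      restrict2 V (plane_form u3 u1), restrict2 V (plane_form u1 u2)}"
    and "s \<in> V\<^sup>\<bottom>"
  obtains a b c where "\<And>x y. x \<in> V \<Longrightarrow> y \<in> V \<Longrightarrow>
    s \<bullet> br x y = - (a * plane_form u2 u3 x y + b * plane_form u3 u1 x y + c * plane_form u1 u2 x y)"
proof -
  have "NtH br V (\<lambda>x. s \<bullet> x) \<in> NtH br V ` annihilator V"
    using assms(2) unfolding annihilator_eq_inner by blast
  then obtain a b c where eq: "NtH br V (\<lambda>x. s \<bullet> x) = form_scale a (restrict2 V (plane_form u2 u3))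
      + form_scale b (restrict2 V (plane_form u3 u1)) + form_scale c (restrict2 V (plane_form u1 u2))"
    unfolding W by (rule forms_span_triple)
  have "s \<bullet> br x y = - (a * plane_form u2 u3 x y + b * plane_form u3 u1 x y + c * plane_form u1 u2 x y)"
    if "x \<in> V" "y \<in> V" for x y
    using fun_cong[OF fun_cong[OF eq, of x], of y] that by (simp add: NtH_apply restrict2_apply)
  then show thesis by (rule that)
qed

lemma iso_onto_orthogonal_comp_volume_form:
  fixes br :: "'a::euclidean_space \<Rightarrow> 'a \<Rightarrow> 'a"
  assumes V: "subspace V" "dim V = n" "DIM('a) = 2 * n"
    and u: "u1 \<in> V" "u2 \<in> V" "u3 \<in> V" "orthonormal3 u1 u2 u3"
    and W: "NtH br V ` annihilator V = forms.span {restrict2 V (plane_form u2 u3),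
      restrict2 V (plane_form u3 u1), restrict2 V (plane_form u1 u2)}" (is "_ = forms.span ?\<Theta>")
  obtains \<Psi> where "linear \<Psi>" "\<Psi> ` V = V\<^sup>\<bottom>" "\<And>z. z \<in> V \<Longrightarrow> \<Psi> z = 0 \<Longrightarrow> z = 0"
    "\<And>X Y Z. X \<in> V \<Longrightarrow> Y \<in> V \<Longrightarrow> Z \<in> V \<Longrightarrow> \<Psi> Z \<bullet> br X Y = - volume_form u1 u2 u3 Z X Y"
proof -
  let ?K = "{k \<in> V\<^sup>\<bottom>. \<forall>x\<in>V. \<forall>y\<in>V. k \<bullet> br x y = 0}"
  have rep: "\<exists>k\<in>V\<^sup>\<bottom>. \<forall>x\<in>V. \<forall>y\<in>V. k \<bullet> br x y = - plane_form a b x y"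
    if "restrict2 V (plane_form a b) \<in> ?\<Theta>" for a b
  proof -
    have "restrict2 V (plane_form a b) \<in> NtH br V ` annihilator V"
      unfolding W using that by (rule forms.span_base)
    then show ?thesis by (rule NtH_image_inner_representative) (auto simp: restrict2_apply)
  qed
  obtain k1 k2 k3 where k: "k1 \<in> V\<^sup>\<bottom>" "k2 \<in> V\<^sup>\<bottom>" "k3 \<in> V\<^sup>\<bottom>"
    and k_br: "\<forall>x\<in>V. \<forall>y\<in>V. k1 \<bullet> br x y = - plane_form u2 u3 x y"
      "\<forall>x\<in>V. \<forall>y\<in>V. k2 \<bullet> br x y = - plane_form u3 u1 x y"
      "\<forall>x\<in>V. \<forall>y\<in>V. k3 \<bullet> br x y = - plane_form u1 u2 x y"
    using rep[of u2 u3] rep[of u3 u1] rep[of u1 u2] by auto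
  have comb: "(c1 *\<^sub>R k1 + c2 *\<^sub>R k2 + c3 *\<^sub>R k3) \<bullet> br x y =
      - (c1 * plane_form u2 u3 x y + c2 * plane_form u3 u1 x y + c3 * plane_form u1 u2 x y)"
    if "x \<in> V" "y \<in> V" for c1 c2 c3 x y
    using k_br that by (simp add: inner_add_left algebra_simps)
  have spanning: "\<exists>c1 c2 c3. s - (c1 *\<^sub>R k1 + c2 *\<^sub>R k2 + c3 *\<^sub>R k3) \<in> ?K" if s: "s \<in> V\<^sup>\<bottom>" for s
  proof -
    obtain a b c where "\<And>x y. x \<in> V \<Longrightarrow> y \<in> V \<Longrightarrow>
      s \<bullet> br x y = - (a * plane_form u2 u3 x y + b * plane_form u3 u1 x y + c * plane_form u1 u2 x y)"
      using inner_bracket_in_span_plane_forms[OF W s] by blast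
    moreover have "s - (a *\<^sub>R k1 + b *\<^sub>R k2 + c *\<^sub>R k3) \<in> V\<^sup>\<bottom>"
      using s k subspace_orthogonal_comp[of V] by (intro subspace_diff subspace_add subspace_scale) auto
    ultimately show ?thesis using comb by (auto simp: inner_diff_left)
  qed
  have indep: "c1 = 0 \<and> c2 = 0 \<and> c3 = 0" if K: "c1 *\<^sub>R k1 + c2 *\<^sub>R k2 + c3 *\<^sub>R k3 \<in> ?K" for c1 c2 c3
  proof -
    have "c1 * plane_form u2 u3 x y + c2 * plane_form u3 u1 x y + c3 * plane_form u1 u2 x y = 0"
      if "x \<in> V" "y \<in> V" for x y
      using comb[OF that, of c1 c2 c3] K that by simp
    from this[of u2 u3] this[of u3 u1] this[of u1 u2] show ?thesis
      using u by (simp add: plane_form_def orthonormal3_inner[OF u(4)])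
  qed
  have K: "subspace ?K"
    using subspace_orthogonal_comp[of V] by (auto simp: subspace_def inner_add_left)
  have dim: "dim V = dim (V\<^sup>\<bottom>)" using dim_orthogonal_comp[OF V(1)] V(2,3) by simp
  obtain \<Psi> where \<Psi>: "linear \<Psi>" "\<Psi> ` V = V\<^sup>\<bottom>" "\<And>z. z \<in> V \<Longrightarrow> \<Psi> z = 0 \<Longrightarrow> z = 0"
    "\<And>z. z \<in> V \<Longrightarrow> \<Psi> z - ((u1 \<bullet> z) *\<^sub>R k1 + (u2 \<bullet> z) *\<^sub>R k2 + (u3 \<bullet> z) *\<^sub>R k3) \<in> ?K"
    using linear_iso_extending_orthonormal3[OF V(1) u subspace_orthogonal_comp K _ k dim spanning indep] by blast
  have "\<Psi> Z \<bullet> br X Y = - volume_form u1 u2 u3 Z X Y" if "X \<in> V" "Y \<in> V" "Z \<in> V" for X Y Z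
  proof -
    have "(\<Psi> Z - ((u1 \<bullet> Z) *\<^sub>R k1 + (u2 \<bullet> Z) *\<^sub>R k2 + (u3 \<bullet> Z) *\<^sub>R k3)) \<bullet> br X Y = 0"
      using \<Psi>(4)[OF that(3)] that(1,2) by blast
    then show ?thesis using comb[OF that(1,2)] by (simp add: volume_form_def inner_diff_left)
  qed
  with \<Psi>(1-3) show thesis by (rule that)
qed

section \<open>The compatible metric\<close>

definition proj_along :: "'a::real_vector set \<Rightarrow> 'a set \<Rightarrow> 'a \<Rightarrow> 'a" where
  "proj_along V H x = (THE v. v \<in> V \<and> x - v \<in> H)"

lemma complementary_ex1_proj:
  assumes "complementary V H" shows "\<exists>!v. v \<in> V \<and> x - v \<in> H"
proof -
  have sV: "subspace V" and sH: "subspace H" and VH: "V \<inter> H = {0}"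
    and dec: "\<forall>x. \<exists>v\<in>V. \<exists>h\<in>H. x = v + h"
    using assms unfolding complementary_def by auto
  obtain v h where "v \<in> V" "h \<in> H" "x = v + h" using dec by blast
  then have v: "v \<in> V" "x - v \<in> H" by simp_all
  have "v' = v" if v': "v' \<in> V" "x - v' \<in> H" for v'
  proof -
    have "v' - v \<in> V" using v'(1) v(1) by (rule subspace_diff[OF sV])
    moreover have "(x - v) - (x - v') \<in> H" using v(2) v'(2) by (rule subspace_diff[OF sH])
    then have "v' - v \<in> H" by (simp add: algebra_simps)
    ultimately have "v' - v \<in> V \<inter> H" by blast
    then show "v' = v" unfolding VH by simp
  qed
  with v show ?thesis by blast
qed

lemma proj_along_mem:
  assumes "complementary V H"
  shows "proj_along V H x \<in> V" "x - proj_along V H x \<in> H"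
  using theI'[OF complementary_ex1_proj[OF assms, of x]] unfolding proj_along_def by auto

lemma proj_along_unique:
  assumes "complementary V H" "v \<in> V" "x - v \<in> H"
  shows "proj_along V H x = v"
  unfolding proj_along_def using complementary_ex1_proj[OF assms(1), of x] assms(2,3) by (simp add: the1_equality)

lemma proj_along_V:
  assumes "complementary V H" "v \<in> V" shows "proj_along V H v = v"
  using assms subspace_0[of H] by (intro proj_along_unique) (simp_all add: complementary_def)

lemma proj_along_H:
  assumes "complementary V H" "h \<in> H" shows "proj_along V H h = 0"
  using assms subspace_0[of V] by (intro proj_along_unique) (simp_all add: complementary_def)

lemma linear_proj_along:
  assumes c: "complementary V H" shows "linear (proj_along V H)"
proof (rule linearI)
  have sV: "subspace V" and sH: "subspace H" using c unfolding complementary_def by auto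
  note p = proj_along_mem[OF c]
  fix x y :: 'a and r :: real
  have "(x - proj_along V H x) + (y - proj_along V H y) \<in> H" by (rule subspace_add[OF sH p(2) p(2)])
  then have "x + y - (proj_along V H x + proj_along V H y) \<in> H" by (simp add: algebra_simps)
  moreover have "proj_along V H x + proj_along V H y \<in> V" by (rule subspace_add[OF sV p(1) p(1)])
  ultimately show "proj_along V H (x + y) = proj_along V H x + proj_along V H y"
    by (intro proj_along_unique[OF c])
  have "r *\<^sub>R (x - proj_along V H x) \<in> H" using p(2) by (rule subspace_scale[OF sH])
  then have "r *\<^sub>R x - r *\<^sub>R proj_along V H x \<in> H" by (simp add: algebra_simps)
  moreover have "r *\<^sub>R proj_along V H x \<in> V" using p(1) by (rule subspace_scale[OF sV])
  ultimately show "proj_along V H (r *\<^sub>R x) = r *\<^sub>R proj_along V H x"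
    by (intro proj_along_unique[OF c])
qed

lemma splitK_eq:
  assumes c: "complementary V H"
  shows "splitK V H x = proj_along V H x - (x - proj_along V H x)"
  unfolding splitK_def
proof (rule the_equality)
  show "\<exists>v\<in>V. \<exists>h\<in>H. x = v + h \<and> proj_along V H x - (x - proj_along V H x) = v - h"
    using proj_along_mem[OF c] by (intro bexI[of _ "proj_along V H x"] bexI[of _ "x - proj_along V H x"]) auto
  fix y assume "\<exists>v\<in>V. \<exists>h\<in>H. x = v + h \<and> y = v - h"
  then obtain v h where "v \<in> V" "h \<in> H" "x = v + h" "y = v - h" by blast
  then show "y = proj_along V H x - (x - proj_along V H x)" using proj_along_unique[OF c, of v x] by simp
qed

lemma proj_along_image_in_orthogonal_comp:
  assumes "complementary V H" "\<Psi> ` V = V\<^sup>\<bottom>" shows "\<Psi> (proj_along V H x) \<in> V\<^sup>\<bottom>"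
  using assms proj_along_mem(1) by blast

definition pairing_metric :: "('a::real_inner \<Rightarrow> 'a) \<Rightarrow> ('a \<Rightarrow> 'a) \<Rightarrow> 'a \<Rightarrow> 'a \<Rightarrow> real" where
  "pairing_metric \<Psi> P X Y = \<Psi> (P X) \<bullet> Y + \<Psi> (P Y) \<bullet> X"

lemma pseudo_metric_pairing_metric:
  fixes \<Psi> :: "'a::euclidean_space \<Rightarrow> 'a"
  assumes c: "complementary V H"
    and \<Psi>: "linear \<Psi>" "\<Psi> ` V = V\<^sup>\<bottom>" "\<And>z. z \<in> V \<Longrightarrow> \<Psi> z = 0 \<Longrightarrow> z = 0"
  shows "pseudo_metric (pairing_metric \<Psi> (proj_along V H))"
proof -
  let ?p = "proj_along V H" and ?g = "pairing_metric \<Psi> (proj_along V H)"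
  have sV: "subspace V" and VH: "V \<inter> H = {0}" using c by (auto simp: complementary_def)
  have lin: "linear (\<lambda>x. \<Psi> (?p x))"
    using linear_compose[OF linear_proj_along[OF c] \<Psi>(1)] by (simp add: o_def)
  have "bilinear ?g"
    unfolding bilinear_def pairing_metric_def
    using linear_add[OF lin] linear_scale[OF lin]
    by (auto intro!: linearI simp: inner_add_left inner_add_right algebra_simps)
  moreover have "?g X Y = ?g Y X" for X Y by (simp add: pairing_metric_def)
  moreover have "X = 0" if X: "\<forall>Y. ?g X Y = 0" for X
  proof -
    have \<Psi>0: "\<Psi> 0 = 0" using \<Psi>(1) by (rule linear_0)
    have "\<Psi> (?p X) \<in> V\<^sup>\<bottom>" using proj_along_image_in_orthogonal_comp[OF c \<Psi>(2)] .
    moreover have "\<Psi> (?p X) \<bullet> h = 0" if "h \<in> H" for h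
      using X[rule_format, of h] proj_along_H[OF c that] \<Psi>0 by (simp add: pairing_metric_def)
    then have "\<Psi> (?p X) \<in> H\<^sup>\<bottom>" by (simp add: in_orthogonal_comp_iff)
    ultimately have "\<Psi> (?p X) \<in> (V + H)\<^sup>\<bottom>"
      by (auto simp: in_orthogonal_comp_iff set_plus_def inner_add_right)
    moreover have "V + H = UNIV" using c by (auto simp: complementary_def set_plus_def)
    ultimately have "\<Psi> (?p X) = 0" by (simp add: in_orthogonal_comp_iff)
    then have "?p X = 0" using \<Psi>(3) proj_along_mem(1)[OF c] by blast
    then have "X \<in> H" using proj_along_mem(2)[OF c, of X] by simp
    have "\<Psi> Y \<bullet> X = 0" if "Y \<in> V" for Y
      using X[rule_format, of Y] \<open>?p X = 0\<close> proj_along_V[OF c that] \<Psi>0 by (simp add: pairing_metric_def)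
    then have "X \<bullet> w = 0" if "w \<in> V\<^sup>\<bottom>" for w
      using that \<Psi>(2)[symmetric] by (auto simp: inner_commute)
    then have "X \<in> V\<^sup>\<bottom>\<^sup>\<bottom>" by (simp add: in_orthogonal_comp_iff)
    then have "X \<in> V" by (simp add: orthogonal_comp_self[OF sV])
    with \<open>X \<in> H\<close> VH show "X = 0" by blast
  qed
  ultimately show ?thesis unfolding pseudo_metric_def by blast
qed

lemma pairing_metric_splitK:
  fixes \<Psi> :: "'a::euclidean_space \<Rightarrow> 'a"
  assumes c: "complementary V H" and \<Psi>V: "\<Psi> ` V = V\<^sup>\<bottom>"
  shows "pairing_metric \<Psi> (proj_along V H) (splitK V H X) (splitK V H Y) = - pairing_metric \<Psi> (proj_along V H) X Y"
proof -
  let ?p = "proj_along V H"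
  have sH: "subspace H" using c by (simp add: complementary_def)
  have p_K: "?p (splitK V H Z) = ?p Z" for Z
  proof (rule proj_along_unique[OF c proj_along_mem(1)[OF c]])
    have "- (Z - ?p Z) \<in> H" using subspace_neg[OF sH proj_along_mem(2)[OF c]] .
    then show "splitK V H Z - ?p Z \<in> H" unfolding splitK_eq[OF c] by (simp add: algebra_simps)
  qed
  have orth: "\<Psi> (?p A) \<bullet> ?p B = 0" for A B
    using proj_along_image_in_orthogonal_comp[OF c \<Psi>V, of A] proj_along_mem(1)[OF c, of B]
    by (simp add: in_orthogonal_comp_iff)
  show ?thesis
    unfolding pairing_metric_def p_K unfolding splitK_eq[OF c]
    using orth[of X Y] orth[of Y X] by (simp add: inner_diff_right)
qed

lemma tau2_zero_pairing_metric:
  fixes \<Psi> :: "'a::euclidean_space \<Rightarrow> 'a"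
  assumes c: "complementary V H" and \<Psi>V: "\<Psi> ` V = V\<^sup>\<bottom>"
    and alt: "\<And>X Y Z. X \<in> V \<Longrightarrow> Y \<in> V \<Longrightarrow> Z \<in> V \<Longrightarrow>
      \<Psi> Z \<bullet> br X Y = - (\<Psi> Z \<bullet> br Y X) \<and> \<Psi> Z \<bullet> br X Y = - (\<Psi> Y \<bullet> br X Z) \<and> \<Psi> Z \<bullet> br X Y = - (\<Psi> X \<bullet> br Z Y)"
  shows "tau2_zero br V (pairing_metric \<Psi> (proj_along V H))"
proof -
  have A: "pairing_metric \<Psi> (proj_along V H) W Z = \<Psi> Z \<bullet> W" if "Z \<in> V" for W Z
    using proj_along_image_in_orthogonal_comp[OF c \<Psi>V, of W] that
    by (simp add: pairing_metric_def proj_along_V[OF c] in_orthogonal_comp_iff)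
  show ?thesis
    unfolding tau2_zero_def Let_def
  proof (intro ballI)
    fix X Y Z assume XYZ: "X \<in> V" "Y \<in> V" "Z \<in> V"
    show "pairing_metric \<Psi> (proj_along V H) (br X Y) Z = - pairing_metric \<Psi> (proj_along V H) (br Y X) Z \<and>
      pairing_metric \<Psi> (proj_along V H) (br X Y) Z = - pairing_metric \<Psi> (proj_along V H) (br X Z) Y \<and>
      pairing_metric \<Psi> (proj_along V H) (br X Y) Z = - pairing_metric \<Psi> (proj_along V H) (br Z Y) X"
      unfolding A[OF XYZ(1)] A[OF XYZ(2)] A[OF XYZ(3)] by (rule alt[OF XYZ])
  qed
qed

lemma tau56_zero_pairing_metric:
  assumes "complementary V H" "lie_subalgebra br H" "linear \<Psi>"
  shows "tau56_zero br H (pairing_metric \<Psi> (proj_along V H))"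
  using assms unfolding tau56_zero_def pairing_metric_def lie_subalgebra_def
  by (simp add: proj_along_H linear_0)

theorem proposition7p2:
  fixes br :: "'a::euclidean_space \<Rightarrow> 'a \<Rightarrow> 'a" and V :: "'a set" and n :: nat
  assumes lie: "lie_bracket br"
    and dimg: "DIM('a) = 2 * n"
    and V: "subspace V" "dim V = n"
    and rank3: "dim_forms2 (NtH br V ` annihilator V) = 3"
    and simple: "\<forall>\<eta>\<in>NtH br V ` annihilator V.
                   \<forall>a\<in>V. \<forall>b\<in>V. \<forall>c\<in>V. \<forall>d\<in>V. wedge22 \<eta> \<eta> a b c d = 0"
    and nodiv: "\<not> (\<exists>\<sigma>. linear \<sigma> \<and> (\<exists>v\<in>V. \<sigma> v \<noteq> 0) \<and>
                   (\<forall>\<eta>\<in>NtH br V ` annihilator V.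
                      \<forall>a\<in>V. \<forall>b\<in>V. \<forall>c\<in>V. wedge12 \<sigma> \<eta> a b c = 0))"
  shows "\<forall>H. lie_subalgebra br H \<and> complementary V H \<longrightarrow>
           (\<exists>g. GL_structure_compatible V H g \<and> tau2_zero br V g \<and> tau56_zero br H g)"
proof (intro allI impI)
  fix H assume H: "lie_subalgebra br H \<and> complementary V H"
  have "bilinear br" using lie by (simp add: lie_bracket_def)
  have "forms.dim (NtH br V ` annihilator V) = 3" using rank3 by (simp add: dim_forms2_eq_forms_dim)
  moreover have "\<forall>\<eta>\<in>NtH br V ` annihilator V. simple_form_on V \<eta>" using simple by (simp add: simple_form_on_def)
  ultimately obtain u1 u2 u3 where u: "u1 \<in> V" "u2 \<in> V" "u3 \<in> V" "orthonormal3 u1 u2 u3"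
    and W: "NtH br V ` annihilator V = forms.span {restrict2 V (plane_form u2 u3),
       restrict2 V (plane_form u3 u1), restrict2 V (plane_form u1 u2)}"
    using NtH_image_eq_span_orthonormal_plane_forms[OF \<open>bilinear br\<close> V(1) _ _ nodiv] by blast
  obtain \<Psi> where \<Psi>: "linear \<Psi>" "\<Psi> ` V = V\<^sup>\<bottom>" "\<And>z. z \<in> V \<Longrightarrow> \<Psi> z = 0 \<Longrightarrow> z = 0"
    and vol: "\<And>X Y Z. X \<in> V \<Longrightarrow> Y \<in> V \<Longrightarrow> Z \<in> V \<Longrightarrow> \<Psi> Z \<bullet> br X Y = - volume_form u1 u2 u3 Z X Y"
    using iso_onto_orthogonal_comp_volume_form[OF V dimg u W] by blast
  let ?g = "pairing_metric \<Psi> (proj_along V H)"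
  have "GL_structure_compatible V H ?g"
    unfolding GL_structure_compatible_def
    using pseudo_metric_pairing_metric[OF _ \<Psi>] pairing_metric_splitK[OF _ \<Psi>(2)] H by blast
  moreover have "tau2_zero br V ?g"
    using H \<Psi>(2) by (intro tau2_zero_pairing_metric alternating_if_eq_volume_form[OF vol]) auto
  moreover have "tau56_zero br H ?g" using H \<Psi>(1) by (intro tau56_zero_pairing_metric) auto
  ultimately show "\<exists>g. GL_structure_compatible V H g \<and> tau2_zero br V g \<and> tau56_zero br H g" by blast
qed

end
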